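(* Let $d\ge3$, $\Omega=\{1,\ldots,d\}$, and $F\le F'\le\mathrm{Sym}(\Omega)$ with $F'$ preserving the orbits of $F$, and suppose $F'$ is not 2-transitive on $\Omega$. Then there exist a vertex $x$ of $T$ and an integer $n\in\{1,2\}$ such that the stabilizer of $x$ in $G(F,F')$ does not act transitively on the set of geodesic segments of length $n$ starting at $x$.
   Context: Let $T=\mathcal{T}_d$ be the $d$-regular tree with a fixed edge coloring $c\colon E(T)\to\Omega$ whose restriction $c_v$ to the edges $E(v)$ at each vertex $v$ is a bijection onto $\Omega$. For $g\in\mathrm{Aut}(T)$, $\sigma(g,v)=c_{gv}\circ g_v\circ c_v^{-1}$ with $g_v\colon E(v)\to E(gv)$ induced by $g$. $U(F')=\{g:\sigma(g,v)\in F'\ \forall v\}$, $G(F)=\{g:\sigma(g,v)\in F$ for all but finitely many $v\}$, $G(F,F')=G(F)\cap U(F')$. *)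

theory Defs
  imports "HOL-Algebra.Sym_Groups"
begin

text \<open>The d-regular tree with a legal edge colouring by Omega = {1..d}:
 vertices are reduced words over {1..d} (no two consecutive letters equal);
 v and v @ [a] are adjacent, and that edge has colour a.\<close>

definition tree_vertices :: "nat \<Rightarrow> nat list set" where
  "tree_vertices d = {w. set w \<subseteq> {1..d} \<and> (\<forall>i. Suc i < length w \<longrightarrow> w ! i \<noteq> w ! Suc i)}"

definition tree_adj :: "nat list \<Rightarrow> nat list \<Rightarrow> bool" where
  "tree_adj v w \<longleftrightarrow> (\<exists>a. w = v @ [a]) \<or> (\<exists>a. v = w @ [a])"

definition edge_col :: "nat list \<Rightarrow> nat list \<Rightarrow> nat" where
  "edge_col v w = (if length v < length w then last w else last v)"

definition nbr :: "nat list \<Rightarrow> nat \<Rightarrow> nat list" where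
  "nbr v a = (if v \<noteq> [] \<and> last v = a then butlast v else v @ [a])"

definition tree_aut :: "nat \<Rightarrow> (nat list \<Rightarrow> nat list) set" where
  "tree_aut d = {g. bij_betw g (tree_vertices d) (tree_vertices d) \<and>
     (\<forall>v\<in>tree_vertices d. \<forall>w\<in>tree_vertices d. tree_adj v w \<longleftrightarrow> tree_adj (g v) (g w))}"

text \<open>local action sigma(g,v) = c_{gv} o g_v o c_v^{-1}, as a permutation of {1..d}\<close>
definition local_action :: "nat \<Rightarrow> (nat list \<Rightarrow> nat list) \<Rightarrow> nat list \<Rightarrow> nat \<Rightarrow> nat" where
  "local_action d g v = (\<lambda>a. if a \<in> {1..d} then edge_col (g v) (g (nbr v a)) else a)"

definition U_grp :: "nat \<Rightarrow> (nat \<Rightarrow> nat) set \<Rightarrow> (nat list \<Rightarrow> nat list) set" where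
  "U_grp d F' = {g \<in> tree_aut d. \<forall>v\<in>tree_vertices d. local_action d g v \<in> F'}"

definition G_grp :: "nat \<Rightarrow> (nat \<Rightarrow> nat) set \<Rightarrow> (nat list \<Rightarrow> nat list) set" where
  "G_grp d F = {g \<in> tree_aut d. finite {v \<in> tree_vertices d. local_action d g v \<notin> F}}"

definition GFF :: "nat \<Rightarrow> (nat \<Rightarrow> nat) set \<Rightarrow> (nat \<Rightarrow> nat) set \<Rightarrow> (nat list \<Rightarrow> nat list) set" where
  "GFF d F F' = G_grp d F \<inter> U_grp d F'"

definition geodesics :: "nat \<Rightarrow> nat list \<Rightarrow> nat \<Rightarrow> nat list list set" where
  "geodesics d x n = {p. length p = Suc n \<and> p ! 0 = x \<and> set p \<subseteq> tree_vertices d \<and>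
     (\<forall>i<n. tree_adj (p ! i) (p ! Suc i)) \<and> (\<forall>i. i + 2 \<le> n \<longrightarrow> p ! (i + 2) \<noteq> p ! i)}"

definition transitive_on_geodesics ::
  "nat \<Rightarrow> (nat list \<Rightarrow> nat list) set \<Rightarrow> nat list \<Rightarrow> nat \<Rightarrow> bool" where
  "transitive_on_geodesics d H x n \<longleftrightarrow>
     (\<forall>p\<in>geodesics d x n. \<forall>q\<in>geodesics d x n. \<exists>g\<in>H. g x = x \<and> map g p = q)"

definition two_transitive :: "nat \<Rightarrow> (nat \<Rightarrow> nat) set \<Rightarrow> bool" where
  "two_transitive d P \<longleftrightarrow> (\<forall>a\<in>{1..d}. \<forall>b\<in>{1..d}. \<forall>a'\<in>{1..d}. \<forall>b'\<in>{1..d}.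
     a \<noteq> b \<longrightarrow> a' \<noteq> b' \<longrightarrow> (\<exists>p\<in>P. p a = a' \<and> p b = b'))"

definition preserves_orbits :: "nat \<Rightarrow> (nat \<Rightarrow> nat) set \<Rightarrow> (nat \<Rightarrow> nat) set \<Rightarrow> bool" where
  "preserves_orbits d F F' \<longleftrightarrow> (\<forall>p\<in>F'. \<forall>a\<in>{1..d}. \<exists>f\<in>F. p a = f a)"

end

theory Submission
  imports Defs
begin

text \<open>If the stabiliser of the root maps the geodesic (root, [a], [a,b]) onto (root, [a'], [a',b']),
  then its local action at the middle vertex [a] sends the colours a, b of the two edges at [a]
  to a', b'. As all local actions of G(F,F') lie in F', transitivity on geodesics of length 2
  forces F' to be 2-transitive.\<close>

lemma reduced_words_up_to_length_two:
  assumes "u \<in> {1..d}" "v \<in> {1..d}" "u \<noteq> v"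
  shows "[] \<in> tree_vertices d" "[u] \<in> tree_vertices d" "[u, v] \<in> tree_vertices d"
  using assms unfolding tree_vertices_def by (auto simp: less_Suc_eq)

lemma two_letter_path_in_geodesics:
  assumes "u \<in> {1..d}" "v \<in> {1..d}" "u \<noteq> v"
  shows "[[], [u], [u, v]] \<in> geodesics d [] 2"
  using reduced_words_up_to_length_two[OF assms]
  unfolding geodesics_def by (auto simp: tree_adj_def less_Suc_eq numeral_2_eq_2)

lemma local_action_at_letter:
  assumes "a \<in> {1..d}" "b \<in> {1..d}" "a \<noteq> b"
    and "g [] = []" "g [a] = [a']" "g [a, b] = [a', b']"
  shows "local_action d g [a] a = a'" "local_action d g [a] b = b'"
  using assms unfolding local_action_def nbr_def edge_col_def by auto

lemma transitive_on_geodesics_imp_two_transitive: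
  assumes "H \<subseteq> U_grp d F'" and "transitive_on_geodesics d H [] 2"
  shows "two_transitive d F'"
  unfolding two_transitive_def
proof (intro ballI impI)
  fix a b a' b' assume ab: "a \<in> {1..d}" "b \<in> {1..d}" "a' \<in> {1..d}" "b' \<in> {1..d}"
    and "a \<noteq> b" "a' \<noteq> b'"
  then obtain g where "g \<in> H" "g [] = []" "map g [[], [a], [a, b]] = [[], [a'], [a', b']]"
    using assms(2) two_letter_path_in_geodesics
    unfolding transitive_on_geodesics_def by blast
  then have "local_action d g [a] \<in> F'"
    and "local_action d g [a] a = a'" "local_action d g [a] b = b'"
    using assms(1) reduced_words_up_to_length_two[of a d b] ab \<open>a \<noteq> b\<close>
      local_action_at_letter[of a d b g a' b']
    unfolding U_grp_def by auto
  then show "\<exists>p\<in>F'. p a = a' \<and> p b = b'" by blast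
qed

theorem mainTheorem10:
  fixes d :: nat and F F' :: "(nat \<Rightarrow> nat) set"
  assumes "d \<ge> 3"
    and "subgroup F (sym_group d)" and "subgroup F' (sym_group d)" and "F \<subseteq> F'"
    and "preserves_orbits d F F'"
    and "\<not> two_transitive d F'"
  shows "\<exists>x\<in>tree_vertices d. \<exists>n\<in>{1::nat, 2}.
           \<not> transitive_on_geodesics d (GFF d F F') x n"
proof -
  have "GFF d F F' \<subseteq> U_grp d F'"
    unfolding GFF_def by blast
  then have "\<not> transitive_on_geodesics d (GFF d F F') [] 2"
    using transitive_on_geodesics_imp_two_transitive assms(6) by blast
  moreover have "[] \<in> tree_vertices d"
    unfolding tree_vertices_def by simp
  ultimately show ?thesis by blast
qed

end
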